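(* Let $C$ be a finite set of $m$ candidates, $N=\{1,\dots,n\}$ voters with weak orders $\succcurlyeq_1,\dots,\succcurlyeq_n$ over $C$, and $k$ a positive integer. Consider the matrix $A$ whose columns are indexed by variables $x_{i,\ell,r}$ ($i\in N,\ell\in[k],r\in[m]$) and $y_c$ ($c\in C$), with one row for $\sum_{c\in C}y_c=k$ (entry $1$ at each $y_c$) and, for each $i\in N,r\in[m]$, one row for $\sum_{\ell\in[k]}x_{i,\ell,r}-\sum_{c:\ \mathrm{rank}_i(c)\le r}y_c\le0$ (entries $1$ at $x_{i,\ell,r}$ for all $\ell$, $-1$ at $y_c$ for $\mathrm{rank}_i(c)\le r$, $0$ elsewhere). If the profile is single-peaked, then $A$ is totally unimodular.
   Context: A weak order partitions $C$ into indifference classes $A_1\succ\dots\succ A_r$; a candidate in $A_t$ has rank $t$ (rank 1 = most preferred). A top-initial segment is a set $\{x:\mathrm{rank}(x)\le t\}$. A profile is single-peaked if there is a linear order (axis) of $C$ such that every top-initial segment of every voter's order is an interval of the axis. A matrix is totally unimodular if every square submatrix has determinant in $\{-1,0,1\}$. $A$ is the constraint matrix of (OWA-IP), ignoring variable bounds. *)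

theory Defs
  imports "Jordan_Normal_Form.Determinant"
begin

text \<open>A weak order (total preorder) on C, given as a relation "x is weakly preferred to y".\<close>
definition weak_order_on :: "'c set \<Rightarrow> ('c \<Rightarrow> 'c \<Rightarrow> bool) \<Rightarrow> bool" where
  "weak_order_on C R \<longleftrightarrow>
     (\<forall>x\<in>C. \<forall>y\<in>C. R x y \<or> R y x) \<and>
     (\<forall>x\<in>C. \<forall>y\<in>C. \<forall>z\<in>C. R x y \<longrightarrow> R y z \<longrightarrow> R x z)"

definition indiff_class :: "'c set \<Rightarrow> ('c \<Rightarrow> 'c \<Rightarrow> bool) \<Rightarrow> 'c \<Rightarrow> 'c set" where
  "indiff_class C R d = {e \<in> C. R e d \<and> R d e}"

text \<open>Rank of c: c lies in the class A_t where t - 1 classes are strictly above it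
  (rank 1 = most preferred).\<close>
definition rank :: "'c set \<Rightarrow> ('c \<Rightarrow> 'c \<Rightarrow> bool) \<Rightarrow> 'c \<Rightarrow> nat" where
  "rank C R c = card {indiff_class C R d | d. d \<in> C \<and> R d c \<and> \<not> R c d} + 1"

definition top_segment :: "'c set \<Rightarrow> ('c \<Rightarrow> 'c \<Rightarrow> bool) \<Rightarrow> nat \<Rightarrow> 'c set" where
  "top_segment C R t = {x \<in> C. rank C R x \<le> t}"

text \<open>An axis is a linear order of C, given by a bijection onto positions.\<close>
definition axis_interval :: "'c set \<Rightarrow> ('c \<Rightarrow> nat) \<Rightarrow> 'c set \<Rightarrow> bool" where
  "axis_interval C pos S \<longleftrightarrow>
     (\<forall>a\<in>S. \<forall>b\<in>S. \<forall>c\<in>C. pos a \<le> pos c \<and> pos c \<le> pos b \<longrightarrow> c \<in> S)"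

definition single_peaked :: "'c set \<Rightarrow> nat set \<Rightarrow> (nat \<Rightarrow> 'c \<Rightarrow> 'c \<Rightarrow> bool) \<Rightarrow> bool" where
  "single_peaked C N pref \<longleftrightarrow>
     (\<exists>pos. bij_betw pos C {0..<card C} \<and>
        (\<forall>i\<in>N. \<forall>t. axis_interval C pos (top_segment C (pref i) t)))"

text \<open>Total unimodularity of a matrix with rows indexed by the finite set Rs and columns
  by the finite set Cs: every square submatrix (rows/columns chosen injectively, in any order,
  which only affects the sign) has determinant in {-1,0,1}.\<close>
definition totally_unimodular :: "'r set \<Rightarrow> 'v set \<Rightarrow> ('r \<Rightarrow> 'v \<Rightarrow> int) \<Rightarrow> bool" where
  "totally_unimodular Rs Cs M \<longleftrightarrow>
     (\<forall>q f g. inj_on f {0..<q} \<and> f ` {0..<q} \<subseteq> Rs \<and> inj_on g {0..<q} \<and> g ` {0..<q} \<subseteq> Cs \<longrightarrow>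
        det (mat q q (\<lambda>(a, b). M (f a) (g b))) \<in> {-1, 0, 1})"

datatype 'c owa_var = X nat nat nat | Y 'c
datatype owa_row = SumRow | RankRow nat nat

definition owa_cols :: "'c set \<Rightarrow> nat \<Rightarrow> nat \<Rightarrow> 'c owa_var set" where
  "owa_cols C n k = {X i l r | i l r. i \<in> {1..n} \<and> l \<in> {1..k} \<and> r \<in> {1..card C}} \<union> Y ` C"

definition owa_rows :: "'c set \<Rightarrow> nat \<Rightarrow> owa_row set" where
  "owa_rows C n = insert SumRow {RankRow i r | i r. i \<in> {1..n} \<and> r \<in> {1..card C}}"

fun owa_matrix :: "'c set \<Rightarrow> (nat \<Rightarrow> 'c \<Rightarrow> 'c \<Rightarrow> bool) \<Rightarrow> owa_row \<Rightarrow> 'c owa_var \<Rightarrow> int" where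
  "owa_matrix C pref SumRow (X i l r) = 0"
| "owa_matrix C pref SumRow (Y c) = 1"
| "owa_matrix C pref (RankRow i r) (X i' l r') = (if i' = i \<and> r' = r then 1 else 0)"
| "owa_matrix C pref (RankRow i r) (Y c) = (if rank C (pref i) c \<le> r then -1 else 0)"

end

theory Submission
  imports Defs
begin

text \<open>
  Every square submatrix of the (OWA-IP) matrix has the following shape: each column coming
  from an \<open>x\<close>-variable has at most one nonzero entry, which is \<open>\<plusminus>1\<close>, and each row,
  restricted to the \<open>y\<close>-columns, is \<open>\<plusminus>\<close> the indicator of an interval of the
  single-peaked axis. This shape is preserved under taking minors. Expanding along an
  \<open>x\<close>-column reduces to a minor. If there are only \<open>y\<close>-columns, consider the leftmost one:
  the intervals of the rows meeting it are nested, so subtracting a row with the smallest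
  such interval from another one keeps the shape, keeps the determinant, and strictly
  decreases the number of nonzero entries; once at most one row meets the leftmost column,
  expand along it.
\<close>

lemma det_in_unit_if_sparse_column:
  fixes B :: "'a :: comm_ring_1 mat"
  assumes B: "B \<in> carrier_mat (Suc q) (Suc q)" and b: "b < Suc q"
    and entries: "\<And>j. j < Suc q \<Longrightarrow> B $$ (j, b) \<in> {-1, 0, 1}"
    and single: "\<And>j j'. j < Suc q \<Longrightarrow> j' < Suc q \<Longrightarrow> B $$ (j, b) \<noteq> 0 \<Longrightarrow> B $$ (j', b) \<noteq> 0 \<Longrightarrow> j = j'"
    and minors: "\<And>i. i < Suc q \<Longrightarrow> B $$ (i, b) \<noteq> 0 \<Longrightarrow> det (mat_delete B i b) \<in> {-1, 0, 1}"
  shows "det B \<in> {-1, 0, 1}"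
proof (cases "\<exists>i<Suc q. B $$ (i, b) \<noteq> 0")
  case False
  then show ?thesis by (simp add: laplace_expansion_column[OF B b])
next
  case True
  then obtain i where i: "i < Suc q" "B $$ (i, b) \<noteq> 0" by auto
  have "det B = (\<Sum>j<Suc q. B $$ (j, b) * cofactor B j b)"
    by (rule laplace_expansion_column[OF B b])
  also have "\<dots> = B $$ (i, b) * cofactor B i b"
  proof -
    have "B $$ (j, b) = 0" if "j < Suc q" "j \<noteq> i" for j
      using single[OF that(1) i(1)] i(2) that(2) by blast
    then show ?thesis
      using i(1) by (subst sum.remove[of _ i]) (auto intro!: sum.neutral)
  qed
  finally have "det B = B $$ (i, b) * cofactor B i b" .
  moreover have "B $$ (i, b) \<in> {-1, 1}" using entries i by auto
  moreover have "cofactor B i b \<in> {-1, 0, 1}"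
    using minors[OF i] unfolding cofactor_def by (cases "even (i + b)") auto
  ultimately show ?thesis by auto
qed

definition nonzero_entries :: "'a :: zero mat \<Rightarrow> (nat \<times> nat) set" where
  "nonzero_entries B = {(a, c). a < dim_row B \<and> c < dim_col B \<and> B $$ (a, c) \<noteq> 0}"

lemma card_nonzero_entries_less:
  assumes dims: "dim_row B' = dim_row B" "dim_col B' = dim_col B"
    and support: "\<And>a c. a < dim_row B \<Longrightarrow> c < dim_col B \<Longrightarrow> B' $$ (a, c) \<noteq> 0 \<Longrightarrow> B $$ (a, c) \<noteq> 0"
    and a: "a < dim_row B" and c: "c < dim_col B" and "B $$ (a, c) \<noteq> 0" "B' $$ (a, c) = 0"
  shows "card (nonzero_entries B') < card (nonzero_entries B)"
proof (rule psubset_card_mono)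
  show "finite (nonzero_entries B)"
    unfolding nonzero_entries_def
    by (rule finite_subset[of _ "{..<dim_row B} \<times> {..<dim_col B}"]) auto
  have "nonzero_entries B' \<subseteq> nonzero_entries B"
    using dims support unfolding nonzero_entries_def by auto
  moreover have "(a, c) \<in> nonzero_entries B - nonzero_entries B'"
    using assms unfolding nonzero_entries_def by auto
  ultimately show "nonzero_entries B' \<subset> nonzero_entries B" by blast
qed

text \<open>\<open>icol\<close> marks the columns of \<open>y\<close>-variables and \<open>pos\<close> gives their place on the axis.\<close>

locale signed_interval_matrix =
  fixes q :: nat and B :: "int mat" and icol :: "nat \<Rightarrow> bool" and pos :: "nat \<Rightarrow> nat"
    and sg :: "nat \<Rightarrow> int" and S :: "nat \<Rightarrow> nat set"
  assumes carrier: "B \<in> carrier_mat q q"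
    and unit_col_entries: "\<And>j b. j < q \<Longrightarrow> b < q \<Longrightarrow> \<not> icol b \<Longrightarrow> B $$ (j, b) \<in> {-1, 0, 1}"
    and unit_col_single: "\<And>j j' b. j < q \<Longrightarrow> j' < q \<Longrightarrow> b < q \<Longrightarrow> \<not> icol b \<Longrightarrow>
      B $$ (j, b) \<noteq> 0 \<Longrightarrow> B $$ (j', b) \<noteq> 0 \<Longrightarrow> j = j'"
    and row_sign: "\<And>j. j < q \<Longrightarrow> sg j \<in> {-1, 1}"
    and interval_col_entries: "\<And>j b. j < q \<Longrightarrow> b < q \<Longrightarrow> icol b \<Longrightarrow>
      B $$ (j, b) = (if b \<in> S j then sg j else 0)"
    and row_interval: "\<And>j b1 b2 b3. j < q \<Longrightarrow> b1 < q \<Longrightarrow> b2 < q \<Longrightarrow> b3 < q \<Longrightarrow>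
      icol b1 \<Longrightarrow> icol b2 \<Longrightarrow> icol b3 \<Longrightarrow> b1 \<in> S j \<Longrightarrow> b3 \<in> S j \<Longrightarrow>
      pos b1 \<le> pos b2 \<Longrightarrow> pos b2 \<le> pos b3 \<Longrightarrow> b2 \<in> S j"

lemma insert_index_less: "i < Suc q \<Longrightarrow> j < q \<Longrightarrow> insert_index i j < Suc q"
  by (simp add: insert_index_def)

lemma insert_index_eq_iff [simp]: "insert_index i j = insert_index i j' \<longleftrightarrow> j = j'"
  by (metis delete_insert_index)

lemma signed_interval_matrix_mat_delete:
  assumes "signed_interval_matrix (Suc q) B icol pos sg S" and i: "i < Suc q" and b: "b < Suc q"
  shows "signed_interval_matrix q (mat_delete B i b) (icol \<circ> insert_index b)
    (pos \<circ> insert_index b) (sg \<circ> insert_index i) (\<lambda>j. insert_index b -` S (insert_index i j))"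
proof -
  interpret signed_interval_matrix "Suc q" B icol pos sg S by fact
  note idx = mat_delete_index[OF carrier i b, symmetric]
  note lt = insert_index_less[OF i] insert_index_less[OF b]
  show ?thesis
  proof
    show "mat_delete B i b \<in> carrier_mat q q"
      using mat_delete_carrier[OF carrier] by simp
  next
    fix j j' c
    assume "j < q" "j' < q" "c < q" "\<not> (icol \<circ> insert_index b) c"
      "mat_delete B i b $$ (j, c) \<noteq> 0" "mat_delete B i b $$ (j', c) \<noteq> 0"
    then show "j = j'"
      using unit_col_single[OF lt(1)[of j] lt(1)[of j'] lt(2)[of c]] by (simp add: idx)
  next
    fix j b1 b2 b3
    assume "j < q" "b1 < q" "b2 < q" "b3 < q" "(icol \<circ> insert_index b) b1"
      "(icol \<circ> insert_index b) b2" "(icol \<circ> insert_index b) b3"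
      "b1 \<in> insert_index b -` S (insert_index i j)" "b3 \<in> insert_index b -` S (insert_index i j)"
      "(pos \<circ> insert_index b) b1 \<le> (pos \<circ> insert_index b) b2"
      "(pos \<circ> insert_index b) b2 \<le> (pos \<circ> insert_index b) b3"
    then show "b2 \<in> insert_index b -` S (insert_index i j)"
      using row_interval[OF lt(1)[of j] lt(2)[of b1] lt(2)[of b2] lt(2)[of b3]] by simp
  qed (use unit_col_entries[OF lt(1) lt(2)] row_sign[OF lt(1)] in
        \<open>simp_all add: idx lt interval_col_entries\<close>)
qed

context signed_interval_matrix
begin

lemma intervals_through_leftmost_nested:
  assumes icols: "\<forall>c<q. icol c" and b0: "b0 < q" and leftmost: "\<forall>c<q. pos b0 \<le> pos c"
    and j: "j < q" "b0 \<in> S j" and k: "k < q" "b0 \<in> S k"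
  shows "S j \<inter> {..<q} \<subseteq> S k \<or> S k \<inter> {..<q} \<subseteq> S j"
proof (rule ccontr)
  assume "\<not> ?thesis"
  then obtain c d where c: "c < q" "c \<in> S j" "c \<notin> S k" and d: "d < q" "d \<in> S k" "d \<notin> S j"
    by blast
  show False
  proof (cases "pos c \<le> pos d")
    case True
    then have "c \<in> S k" using row_interval[OF k(1) b0 c(1) d(1)] icols b0 c d leftmost k by simp
    with c show False by simp
  next
    case False
    then have "d \<in> S j" using row_interval[OF j(1) b0 d(1) c(1)] icols b0 c d leftmost j by simp
    with d show False by simp
  qed
qed

lemma addrow_entries:
  assumes icols: "\<forall>c<q. icol c" and j: "j < q" and k: "k < q" and nested: "S k \<inter> {..<q} \<subseteq> S j"
    and a: "a < q" and c: "c < q"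
  shows "addrow (- (sg j * sg k)) j k B $$ (a, c) = (if c \<in> (S(j := S j - S k)) a then sg a else 0)"
proof (cases "a = j")
  case True
  have "sg k * sg k = 1" using row_sign[OF k] by auto
  then have cancel: "- (sg j * sg k) * sg k + sg j = 0" by (simp add: algebra_simps)
  have "addrow (- (sg j * sg k)) j k B $$ (a, c) = - (sg j * sg k) * B $$ (k, c) + B $$ (j, c)"
    using a c carrier True by simp
  also have "\<dots> = (if c \<in> S j - S k then sg j else 0)"
    using interval_col_entries[OF k c] interval_col_entries[OF j c] icols c nested cancel by auto
  finally show ?thesis using True by simp
next
  case False
  then show ?thesis using a c carrier interval_col_entries[OF a c] icols by simp
qed

lemma signed_interval_matrix_addrow:
  assumes icols: "\<forall>c<q. icol c" and b0: "b0 < q" and leftmost: "\<forall>c<q. pos b0 \<le> pos c"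
    and j: "j < q" and k: "k < q" "b0 \<in> S k" and nested: "S k \<inter> {..<q} \<subseteq> S j"
  shows "signed_interval_matrix q (addrow (- (sg j * sg k)) j k B) icol pos sg (S(j := S j - S k))"
proof
  show "addrow (- (sg j * sg k)) j k B \<in> carrier_mat q q" using carrier by simp
next
  fix a b1 b2 b3
  assume h: "a < q" "b1 < q" "b2 < q" "b3 < q" "icol b1" "icol b2" "icol b3"
    "b1 \<in> (S(j := S j - S k)) a" "b3 \<in> (S(j := S j - S k)) a" "pos b1 \<le> pos b2" "pos b2 \<le> pos b3"
  show "b2 \<in> (S(j := S j - S k)) a"
  proof (cases "a = j")
    case True
    have "b2 \<notin> S k"
    proof
      assume "b2 \<in> S k"
      then have "b1 \<in> S k" using row_interval[OF k(1) b0 h(2,3)] icols b0 k leftmost h by simp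
      then show False using h True by simp
    qed
    then show ?thesis using h True row_interval[OF j h(2-4)] by simp
  next
    case False
    then show ?thesis using h row_interval[OF h(1-7)] by simp
  qed
qed (use icols row_sign addrow_entries[OF icols j k(1) nested] in simp_all)

lemma nonzero_entries_addrow_less:
  assumes icols: "\<forall>c<q. icol c" and b0: "b0 < q" and j: "j < q" "b0 \<in> S j"
    and k: "k < q" "b0 \<in> S k" and nested: "S k \<inter> {..<q} \<subseteq> S j"
  shows "card (nonzero_entries (addrow (- (sg j * sg k)) j k B)) < card (nonzero_entries B)"
proof (rule card_nonzero_entries_less)
  note entries = addrow_entries[OF icols j(1) k(1) nested]
  have sg_nonzero: "sg a \<noteq> 0" if "a < q" for a using row_sign[OF that] by auto
  show "B $$ (j, b0) \<noteq> 0" using interval_col_entries[OF j(1) b0] icols b0 j sg_nonzero by simp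
  show "addrow (- (sg j * sg k)) j k B $$ (j, b0) = 0" using entries[OF j(1) b0] k by simp
  fix a c assume "a < dim_row B" "c < dim_col B" "addrow (- (sg j * sg k)) j k B $$ (a, c) \<noteq> 0"
  then show "B $$ (a, c) \<noteq> 0"
    using carrier entries interval_col_entries icols sg_nonzero by (auto split: if_splits)
qed (use carrier j b0 in auto)


lemma nested_rows_through_leftmost:
  assumes icols: "\<forall>c<q. icol c" and b0: "b0 < q" and leftmost: "\<forall>c<q. pos b0 \<le> pos c"
    and "\<not> (\<forall>j<q. \<forall>j'<q. b0 \<in> S j \<longrightarrow> b0 \<in> S j' \<longrightarrow> j = j')"
  obtains j k where "j < q" "b0 \<in> S j" "j \<noteq> k" "k < q" "b0 \<in> S k" "S k \<inter> {..<q} \<subseteq> S j"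
proof -
  from assms(4) obtain j1 j2 where j12: "j1 < q" "j2 < q" "b0 \<in> S j1" "b0 \<in> S j2" "j1 \<noteq> j2"
    by blast
  obtain k where k: "k < q" "b0 \<in> S k"
    and smallest: "\<And>j. j < q \<Longrightarrow> b0 \<in> S j \<Longrightarrow> card (S k \<inter> {..<q}) \<le> card (S j \<inter> {..<q})"
    using ex_has_least_nat[of "\<lambda>j. j < q \<and> b0 \<in> S j" j1 "\<lambda>j. card (S j \<inter> {..<q})"] j12
    by blast
  obtain j where j: "j < q" "b0 \<in> S j" "j \<noteq> k"
    using j12 by (cases "j1 = k") auto
  have "S k \<inter> {..<q} \<subseteq> S j"
  proof (cases "S k \<inter> {..<q} \<subseteq> S j")
    case False
    then have "S j \<inter> {..<q} \<subseteq> S k \<inter> {..<q}"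
      using intervals_through_leftmost_nested[OF icols b0 leftmost j(1,2) k] by blast
    then have "S j \<inter> {..<q} = S k \<inter> {..<q}"
      using smallest[OF j(1,2)] by (intro card_seteq) auto
    then show ?thesis by blast
  qed
  with j k show thesis using that by blast
qed

end

lemma det_in_unit_if_interval_columns:
  assumes "signed_interval_matrix (Suc q) B icol pos sg S" and icols: "\<forall>c<Suc q. icol c"
    and minors: "\<And>B icol pos sg S. signed_interval_matrix q B icol pos sg S \<Longrightarrow> det B \<in> {-1, 0, 1}"
  shows "det B \<in> {-1, 0, 1}"
  using assms(1)
proof (induction "card (nonzero_entries B)" arbitrary: B S rule: less_induct)
  case less
  interpret signed_interval_matrix "Suc q" B icol pos sg S by fact
  obtain b0 where b0: "b0 < Suc q" and leftmost: "\<forall>c<Suc q. pos b0 \<le> pos c"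
    using ex_has_least_nat[of "\<lambda>c. c < Suc q" 0 pos] by auto
  have column_b0: "B $$ (j, b0) = (if b0 \<in> S j then sg j else 0)" if "j < Suc q" for j
    using interval_col_entries[OF that b0] icols b0 by simp
  show ?case
  proof (cases "\<forall>j<Suc q. \<forall>j'<Suc q. b0 \<in> S j \<longrightarrow> b0 \<in> S j' \<longrightarrow> j = j'")
    case True
    show ?thesis
    proof (rule det_in_unit_if_sparse_column[OF carrier b0])
      show "B $$ (j, b0) \<in> {-1, 0, 1}" if "j < Suc q" for j
        using column_b0[OF that] row_sign[OF that] by auto
      show "j = j'" if "j < Suc q" "j' < Suc q" "B $$ (j, b0) \<noteq> 0" "B $$ (j', b0) \<noteq> 0" for j j'
        using that True column_b0 by (metis (full_types))
      show "det (mat_delete B i b0) \<in> {-1, 0, 1}" if "i < Suc q" for i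
        by (rule minors[OF signed_interval_matrix_mat_delete[OF less.prems that b0]])
    qed
  next
    case False
    then obtain j k where j: "j < Suc q" "b0 \<in> S j" "j \<noteq> k" and k: "k < Suc q" "b0 \<in> S k"
      and nested: "S k \<inter> {..<Suc q} \<subseteq> S j"
      using nested_rows_through_leftmost[OF icols b0 leftmost] by blast
    let ?B' = "addrow (- (sg j * sg k)) j k B"
    have "det ?B' \<in> {-1, 0, 1}"
      using less.hyps[OF nonzero_entries_addrow_less[OF icols b0 j(1,2) k nested]]
        signed_interval_matrix_addrow[OF icols b0 leftmost j(1) k nested] by blast
    then show ?thesis using det_addrow[OF k(1) j(3) carrier] by simp
  qed
qed

lemma det_in_unit_if_signed_interval_matrix:
  "signed_interval_matrix q B icol pos sg S \<Longrightarrow> det B \<in> {-1, 0, 1}"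
proof (induction q arbitrary: B icol pos sg S)
  case 0
  then show ?case using signed_interval_matrix.carrier by fastforce
next
  case (Suc q)
  interpret signed_interval_matrix "Suc q" B icol pos sg S by fact
  show ?case
  proof (cases "\<forall>c<Suc q. icol c")
    case True
    then show ?thesis by (rule det_in_unit_if_interval_columns[OF Suc.prems]) (rule Suc.IH)
  next
    case False
    then obtain b where b: "b < Suc q" "\<not> icol b" by blast
    show ?thesis
      by (rule det_in_unit_if_sparse_column[OF carrier b(1)])
        (use b unit_col_entries unit_col_single
          Suc.IH[OF signed_interval_matrix_mat_delete[OF Suc.prems _ b(1)]] in auto)
  qed
qed

fun y_var :: "'c owa_var \<Rightarrow> bool" where
  "y_var (X i l r) = False"
| "y_var (Y c) = True"

fun owa_row_sign :: "owa_row \<Rightarrow> int" where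
  "owa_row_sign SumRow = 1"
| "owa_row_sign (RankRow i r) = -1"

fun owa_row_support :: "'c set \<Rightarrow> (nat \<Rightarrow> 'c \<Rightarrow> 'c \<Rightarrow> bool) \<Rightarrow> owa_row \<Rightarrow> 'c \<Rightarrow> bool" where
  "owa_row_support C pref SumRow c = True"
| "owa_row_support C pref (RankRow i r) c = (rank C (pref i) c \<le> r)"

lemma owa_matrix_Y:
  "owa_matrix C pref w (Y c) = (if owa_row_support C pref w c then owa_row_sign w else 0)"
  by (cases w) simp_all

lemma owa_matrix_X_nonzero: "owa_matrix C pref w (X i l r) \<noteq> 0 \<Longrightarrow> w = RankRow i r"
  by (cases w) (simp_all split: if_splits)

lemma owa_row_support_interval:
  assumes w: "w \<in> owa_rows C n"
    and axis: "\<forall>i\<in>{1..n}. \<forall>t. axis_interval C pos (top_segment C (pref i) t)"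
    and c: "c1 \<in> C" "c2 \<in> C" "c3 \<in> C" "pos c1 \<le> pos c2" "pos c2 \<le> pos c3"
    and support: "owa_row_support C pref w c1" "owa_row_support C pref w c3"
  shows "owa_row_support C pref w c2"
proof (cases w)
  case (RankRow i r)
  with w have "i \<in> {1..n}" unfolding owa_rows_def by auto
  moreover have "c1 \<in> top_segment C (pref i) r" "c3 \<in> top_segment C (pref i) r"
    using support c RankRow unfolding top_segment_def by auto
  ultimately have "c2 \<in> top_segment C (pref i) r"
    using axis c unfolding axis_interval_def by blast
  then show ?thesis using RankRow unfolding top_segment_def by simp
qed simp

lemma signed_interval_matrix_owa_submatrix:
  fixes f :: "nat \<Rightarrow> owa_row" and g :: "nat \<Rightarrow> 'c owa_var"
  assumes f: "inj_on f {0..<q}" "f ` {0..<q} \<subseteq> owa_rows C n" and g: "g ` {0..<q} \<subseteq> owa_cols C n k"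
    and axis: "\<forall>i\<in>{1..n}. \<forall>t. axis_interval C pos (top_segment C (pref i) t)"
  shows "signed_interval_matrix q (mat q q (\<lambda>(a, b). owa_matrix C pref (f a) (g b)))
    (y_var \<circ> g) (\<lambda>b. case g b of Y c \<Rightarrow> pos c | X i l r \<Rightarrow> 0) (owa_row_sign \<circ> f)
    (\<lambda>a. {b. \<exists>c. g b = Y c \<and> owa_row_support C pref (f a) c})"
    (is "signed_interval_matrix q ?M ?icol ?pos ?sg ?S")
proof
  have entry: "?M $$ (a, b) = owa_matrix C pref (f a) (g b)" if "a < q" "b < q" for a b
    using that by simp
  have Y_in_C: "c \<in> C" if "b < q" "g b = Y c" for b c
    using g that unfolding owa_cols_def by force
  show "?M \<in> carrier_mat q q" by simp
  show "?M $$ (j, b) \<in> {-1, 0, 1}" if "j < q" "b < q" "\<not> ?icol b" for j b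
    using that by (cases "g b"; cases "f j") (simp_all add: entry)
  show "j = j'"
    if h: "j < q" "j' < q" "b < q" "\<not> ?icol b" "?M $$ (j, b) \<noteq> 0" "?M $$ (j', b) \<noteq> 0"
    for j j' b
  proof -
    obtain i l r where "g b = X i l r" using h(4) by (cases "g b") auto
    then have "f j = f j'" using h by (auto simp: entry dest!: owa_matrix_X_nonzero)
    then show ?thesis using f(1) h(1,2) by (simp add: inj_on_eq_iff)
  qed
  show "?sg j \<in> {-1, 1}" for j by (cases "f j") simp_all
  show "?M $$ (j, b) = (if b \<in> ?S j then ?sg j else 0)" if "j < q" "b < q" "?icol b" for j b
    using that by (cases "g b") (auto simp: entry owa_matrix_Y)
  show "b2 \<in> ?S j"
    if h: "j < q" "b1 < q" "b2 < q" "b3 < q" "?icol b1" "?icol b2" "?icol b3"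
      "b1 \<in> ?S j" "b3 \<in> ?S j" "?pos b1 \<le> ?pos b2" "?pos b2 \<le> ?pos b3" for j b1 b2 b3
  proof -
    obtain c1 c2 c3 where c: "g b1 = Y c1" "g b2 = Y c2" "g b3 = Y c3"
      using h(5-7) by (cases "g b1"; cases "g b2"; cases "g b3") auto
    have "f j \<in> owa_rows C n" using f(2) h(1) by auto
    then show ?thesis
      using owa_row_support_interval[OF _ axis, of "f j" c1 c2 c3] h c Y_in_C by auto
  qed
qed

theorem mainTheorem7:
  fixes C :: "'c set" and n k :: nat and pref :: "nat \<Rightarrow> 'c \<Rightarrow> 'c \<Rightarrow> bool"
  assumes "finite C"
    and "\<forall>i\<in>{1..n}. weak_order_on C (pref i)"
    and "k > 0"
    and "single_peaked C {1..n} pref"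
  shows "totally_unimodular (owa_rows C n) (owa_cols C n k) (owa_matrix C pref)"
  unfolding totally_unimodular_def
proof (intro allI impI, elim conjE)
  fix q and f :: "nat \<Rightarrow> owa_row" and g :: "nat \<Rightarrow> 'c owa_var"
  assume "inj_on f {0..<q}" "f ` {0..<q} \<subseteq> owa_rows C n" "g ` {0..<q} \<subseteq> owa_cols C n k"
  moreover obtain pos where "\<forall>i\<in>{1..n}. \<forall>t. axis_interval C pos (top_segment C (pref i) t)"
    using assms(4) unfolding single_peaked_def by blast
  ultimately show "det (mat q q (\<lambda>(a, b). owa_matrix C pref (f a) (g b))) \<in> {-1, 0, 1}"
    by (rule det_in_unit_if_signed_interval_matrix[OF signed_interval_matrix_owa_submatrix])
qed

end
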